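(* Let $\mathcal K$ (UAVs) and $\mathcal I$ (subscribers) be finite sets. Fix $H>0$, $\sigma^2>0$, constants $\omega_{ij}>0$, transmit powers $p_j\ge0$ ($j\in\mathcal K$), subscriber positions $s_i\in\mathbb R^2$, and association indicators $c_{ik}\in\{0,1\}$ with $\sum_k c_{ik}\le 1$. Decision variables are UAV horizontal positions $q_j\in\mathbb R^2$ ($j\in\mathcal K$), reals $\eta_i$, and slack variables $b_{ij}>-H^2$ ($i\in\mathcal I$, $j\in\mathcal K$). With $h_{ij}(q)=\omega_{ij}/(H^2+\|q_j-s_i\|^2)$, consider the non-convex constraint $$\sum_{k}c_{ik}\log_2\Big(1+\frac{p_kh_{ik}(q)}{\sigma^2+\sum_{j\ne k}p_jh_{ij}(q)}\Big)\ge \eta_i. \qquad(\ast)$$ Fix a local point $q^{(r)}=(q^{(r)}_j)_{j\in\mathcal K}$ and define $d^{(r)}_{ij}=H^2+\|q^{(r)}_j-s_i\|^2$, $D^{(r)}_i=\log_2\big(\sigma^2+\sum_{j\in\mathcal K}p_j\omega_{ij}/d^{(r)}_{ij}\big)$, $E^{(r)}_{ij}=\dfrac{p_j\omega_{ij}}{(d^{(r)}_{ij})^2\,2^{D^{(r)}_i}\ln 2}$, and $\tilde\Lambda_{ik}(b)=-\log_2\big(\sigma^2+\sum_{j\ne k}\frac{p_j\omega_{ij}}{H^2+b_{ij}}\big)$. Consider the constraints $$\sum_k c_{ik}\Big(D^{(r)}_i-\sum_{j\in\mathcal K}E^{(r)}_{ij}\big(\|q_j-s_i\|^2-\|q^{(r)}_j-s_i\|^2\big)\Big)+\sum_kc_{ik}\tilde\Lambda_{ik}(b)\ge\eta_i\qquad(\ast\ast)$$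 and, for all $i\in\mathcal I$, $j\in\mathcal K$, $$-\|q^{(r)}_j-s_i\|^2+2(q^{(r)}_j-s_i)^{\mathrm T}(q_j-s_i)\ge b_{ij}.\qquad(\ast\ast\ast)$$ Then the set of $(q,\eta_i,b)$ (with $b_{ij}>-H^2$) satisfying $(\ast\ast)$ and $(\ast\ast\ast)$ is convex, and every such point satisfies $(\ast)$; i.e., $(\ast\ast)$–$(\ast\ast\ast)$ form a convex approximation of $(\ast)$ whose feasible set (projected onto $(q,\eta_i)$) is contained in that of $(\ast)$.
   Context: Setting: one time slot of a multi-UAV downlink where all UAVs fly at altitude $H$, UAV $j$ is at horizontal position $q_j$, subscriber $i$ at $s_i$ on the ground, the line-of-sight channel gain is $h_{ij}=\omega_{ij}/(H^2+\|q_j-s_i\|^2)$, and the left side of $(\ast)$ is subscriber $i$'s achievable rate under interference from the other UAVs. In the paper the slack $b_{ij}$ (written $B_{ij}(t)$) is introduced as a lower bound $b_{ij}\le\|q_j-s_i\|^2$, which $(\ast\ast\ast)$ replaces by its linearization at $q^{(r)}$. *)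

theory Defs
  imports "HOL-Analysis.Analysis"
begin

text \<open>UAV set = finite type 'k, subscriber set = finite type 'i.
  Horizontal positions are in real^2; the UAV placement q is a vector in (real^2)^'k,
  the slacks b form b $ i $ j.\<close>

definition chgain :: "('i \<Rightarrow> 'k \<Rightarrow> real) \<Rightarrow> real \<Rightarrow> ('i \<Rightarrow> real^2) \<Rightarrow> (real^2)^'k \<Rightarrow> 'i \<Rightarrow> 'k \<Rightarrow> real" where
  "chgain \<omega> H s q i j = \<omega> i j / (H\<^sup>2 + (norm (q $ j - s i))\<^sup>2)"

definition rate :: "('i \<Rightarrow> 'k::finite \<Rightarrow> real) \<Rightarrow> real \<Rightarrow> real \<Rightarrow> ('k \<Rightarrow> real) \<Rightarrow> ('i \<Rightarrow> 'k \<Rightarrow> real)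
    \<Rightarrow> ('i \<Rightarrow> real^2) \<Rightarrow> (real^2)^'k \<Rightarrow> 'i \<Rightarrow> real" where
  "rate c H \<sigma>2 p \<omega> s q i =
     (\<Sum>k\<in>UNIV. c i k * log 2 (1 + p k * chgain \<omega> H s q i k /
         (\<sigma>2 + (\<Sum>j\<in>UNIV - {k}. p j * chgain \<omega> H s q i j))))"

definition d_r :: "real \<Rightarrow> ('i \<Rightarrow> real^2) \<Rightarrow> (real^2)^'k \<Rightarrow> 'i \<Rightarrow> 'k \<Rightarrow> real" where
  "d_r H s qr i j = H\<^sup>2 + (norm (qr $ j - s i))\<^sup>2"

definition D_r :: "real \<Rightarrow> real \<Rightarrow> ('k::finite \<Rightarrow> real) \<Rightarrow> ('i \<Rightarrow> 'k \<Rightarrow> real)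
    \<Rightarrow> ('i \<Rightarrow> real^2) \<Rightarrow> (real^2)^'k \<Rightarrow> 'i \<Rightarrow> real" where
  "D_r H \<sigma>2 p \<omega> s qr i = log 2 (\<sigma>2 + (\<Sum>j\<in>UNIV. p j * \<omega> i j / d_r H s qr i j))"

definition E_r :: "real \<Rightarrow> real \<Rightarrow> ('k::finite \<Rightarrow> real) \<Rightarrow> ('i \<Rightarrow> 'k \<Rightarrow> real)
    \<Rightarrow> ('i \<Rightarrow> real^2) \<Rightarrow> (real^2)^'k \<Rightarrow> 'i \<Rightarrow> 'k \<Rightarrow> real" where
  "E_r H \<sigma>2 p \<omega> s qr i j =
     p j * \<omega> i j / ((d_r H s qr i j)\<^sup>2 * 2 powr (D_r H \<sigma>2 p \<omega> s qr i) * ln 2)"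

definition Lambda_t :: "real \<Rightarrow> real \<Rightarrow> ('k::finite \<Rightarrow> real) \<Rightarrow> ('i \<Rightarrow> 'k \<Rightarrow> real)
    \<Rightarrow> real^'k^'i \<Rightarrow> 'i \<Rightarrow> 'k \<Rightarrow> real" where
  "Lambda_t H \<sigma>2 p \<omega> b i k =
     - log 2 (\<sigma>2 + (\<Sum>j\<in>UNIV - {k}. p j * \<omega> i j / (H\<^sup>2 + b $ i $ j)))"

definition feas :: "('i::finite \<Rightarrow> 'k::finite \<Rightarrow> real) \<Rightarrow> real \<Rightarrow> real \<Rightarrow> ('k \<Rightarrow> real)
    \<Rightarrow> ('i \<Rightarrow> 'k \<Rightarrow> real) \<Rightarrow> ('i \<Rightarrow> real^2) \<Rightarrow> (real^2)^'k \<Rightarrow> 'i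
    \<Rightarrow> (((real^2)^'k) \<times> real \<times> (real^'k^'i)) set" where
  "feas c H \<sigma>2 p \<omega> s qr i =
     {(q, \<eta>, b). (\<forall>i' j. b $ i' $ j > - H\<^sup>2)
        \<and> (\<Sum>k\<in>UNIV. c i k * (D_r H \<sigma>2 p \<omega> s qr i
              - (\<Sum>j\<in>UNIV. E_r H \<sigma>2 p \<omega> s qr i j *
                    ((norm (q $ j - s i))\<^sup>2 - (norm (qr $ j - s i))\<^sup>2))))
          + (\<Sum>k\<in>UNIV. c i k * Lambda_t H \<sigma>2 p \<omega> b i k) \<ge> \<eta>
        \<and> (\<forall>i' j. - (norm (qr $ j - s i'))\<^sup>2 + 2 * ((qr $ j - s i') \<bullet> (q $ j - s i')) \<ge> b $ i' $ j)}"

end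

theory Submission
  imports Defs
begin

(* The k-th rate term is log2 of the total received power minus log2 of the interference.
   As a function of the denominators y_j = H^2 + |q_j - s_i|^2, ln (sigma + sum_j a_j / y_j)
   is convex (its tangent inequality reduces to Cauchy-Schwarz and AM-GM), so the total-power
   term lies above its linearization at q^(r); that linearization is concave in q because its
   coefficients E_ij are nonnegative and |.|^2 is convex.  The interference decreases in the
   squared distances, and (***) is the tangent of |.|^2, so b_ij <= |q_j - s_i|^2 and the
   interference term is bounded by the concave function Lambda_t of b.  Thus (**) is a concave
   superlevel constraint and (***) is affine, which gives convexity, and together they imply
   the original rate constraint. *)

lemma sum_divide_cauchy_schwarz:
  fixes a y z :: "'a \<Rightarrow> real"
  assumes "\<And>j. j \<in> J \<Longrightarrow> a j \<ge> 0" "\<And>j. j \<in> J \<Longrightarrow> y j > 0" "\<And>j. j \<in> J \<Longrightarrow> z j > 0"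
  shows "(\<Sum>j\<in>J. a j / z j)\<^sup>2 \<le> (\<Sum>j\<in>J. a j / y j) * (\<Sum>j\<in>J. a j * y j / (z j)\<^sup>2)"
proof -
  have "(\<Sum>j\<in>J. a j / z j) = (\<Sum>j\<in>J. sqrt (a j / y j) * sqrt (a j * y j / (z j)\<^sup>2))"
  proof (rule sum.cong)
    fix j assume j: "j \<in> J"
    have "sqrt (a j / y j) * sqrt (a j * y j / (z j)\<^sup>2) = sqrt ((a j / z j)\<^sup>2)"
      using assms(2,3)[OF j] by (simp add: real_sqrt_mult[symmetric] field_simps power2_eq_square)
    then show "a j / z j = sqrt (a j / y j) * sqrt (a j * y j / (z j)\<^sup>2)"
      using assms[OF j] by simp
  qed simp
  also have "\<dots>\<^sup>2 \<le> (\<Sum>j\<in>J. (sqrt (a j / y j))\<^sup>2) * (\<Sum>j\<in>J. (sqrt (a j * y j / (z j)\<^sup>2))\<^sup>2)"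
    by (rule Cauchy_Schwarz_ineq_sum)
  also have "\<dots> = (\<Sum>j\<in>J. a j / y j) * (\<Sum>j\<in>J. a j * y j / (z j)\<^sup>2)"
    using assms by (intro arg_cong2[where f = "(*)"] sum.cong) (auto simp: less_imp_le)
  finally show ?thesis .
qed

lemma sum_divide_am_gm:
  fixes a y z :: "'a \<Rightarrow> real"
  assumes "\<And>j. j \<in> J \<Longrightarrow> a j \<ge> 0" "\<And>j. j \<in> J \<Longrightarrow> y j > 0" "\<And>j. j \<in> J \<Longrightarrow> z j > 0"
  shows "2 * (\<Sum>j\<in>J. a j / z j) \<le> (\<Sum>j\<in>J. a j / y j) + (\<Sum>j\<in>J. a j * y j / (z j)\<^sup>2)"
proof -
  have "2 * (a j / z j) \<le> a j / y j + a j * y j / (z j)\<^sup>2" if j: "j \<in> J" for j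
  proof -
    have "a j / y j + a j * y j / (z j)\<^sup>2 - 2 * (a j / z j) = a j * (z j - y j)\<^sup>2 / (y j * (z j)\<^sup>2)"
      using assms(2,3)[OF j] by (simp add: field_simps power2_eq_square)
    also have "\<dots> \<ge> 0" using assms[OF j] by simp
    finally show ?thesis by simp
  qed
  then show ?thesis by (simp add: sum_distrib_left sum.distrib[symmetric] sum_mono)
qed

lemma ln_add_sum_divide_ge_tangent:
  fixes a y z :: "'a \<Rightarrow> real"
  assumes "\<sigma> > 0" "\<And>j. j \<in> J \<Longrightarrow> a j \<ge> 0"
    "\<And>j. j \<in> J \<Longrightarrow> y j > 0" "\<And>j. j \<in> J \<Longrightarrow> z j > 0"
  shows "ln (\<sigma> + (\<Sum>j\<in>J. a j / y j)) \<ge> ln (\<sigma> + (\<Sum>j\<in>J. a j / z j))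
     - (\<Sum>j\<in>J. a j * (y j - z j) / (z j)\<^sup>2) / (\<sigma> + (\<Sum>j\<in>J. a j / z j))"
proof -
  define A where "A = (\<Sum>j\<in>J. a j / z j)"
  define B where "B = (\<Sum>j\<in>J. a j / y j)"
  define C where "C = (\<Sum>j\<in>J. a j * y j / (z j)\<^sup>2)"
  have "A \<ge> 0" "B \<ge> 0" unfolding A_def B_def using assms by (auto intro!: sum_nonneg divide_nonneg_pos)
  have "(\<Sum>j\<in>J. a j * (y j - z j) / (z j)\<^sup>2) = C - A"
    unfolding C_def A_def sum_subtractf[symmetric]
  proof (rule sum.cong)
    fix j assume "j \<in> J"
    then have "z j > 0" by (rule assms(4))
    then show "a j * (y j - z j) / (z j)\<^sup>2 = a j * y j / (z j)\<^sup>2 - a j / z j"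
      by (simp add: field_simps power2_eq_square)
  qed simp
  moreover have "ln (\<sigma> + A) - ln (\<sigma> + B) \<le> (A - B) / (\<sigma> + B)"
    using ln_diff_le[of "\<sigma> + A" "\<sigma> + B"] \<open>\<sigma> > 0\<close> \<open>A \<ge> 0\<close> \<open>B \<ge> 0\<close> by simp
  moreover have "(A - B) / (\<sigma> + B) \<le> (C - A) / (\<sigma> + A)"
  proof -
    \<comment> \<open>cross-multiplied, the difference is \<open>\<sigma> (B + C - 2A) + (BC - A\<^sup>2)\<close>\<close>
    have "\<sigma> * (2 * A) \<le> \<sigma> * (B + C)"
      using sum_divide_am_gm[of J a y z] assms unfolding A_def B_def C_def
      by (intro mult_left_mono) auto
    moreover have "A\<^sup>2 \<le> B * C"
      using sum_divide_cauchy_schwarz[of J a y z] assms unfolding A_def B_def C_def by auto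
    ultimately have "(A - B) * (\<sigma> + A) \<le> (C - A) * (\<sigma> + B)"
      by (simp add: algebra_simps power2_eq_square)
    then show ?thesis using \<open>\<sigma> > 0\<close> \<open>A \<ge> 0\<close> \<open>B \<ge> 0\<close> by (simp add: divide_simps mult.commute)
  qed
  ultimately show ?thesis unfolding A_def B_def by simp
qed

lemma convex_on_ln_add_sum_divide:
  fixes a :: "'n::finite \<Rightarrow> real"
  assumes "\<sigma> > 0" and a: "\<And>j. j \<in> J \<Longrightarrow> a j \<ge> 0"
  shows "convex_on {y :: real^'n. \<forall>j\<in>J. 0 < y $ j} (\<lambda>y. ln (\<sigma> + (\<Sum>j\<in>J. a j / y $ j)))"
    (is "convex_on ?Y ?f")
proof -
  have "?Y = (\<Inter>j\<in>J. (\<lambda>y. y $ j) -` {0<..})" by auto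
  then have "convex ?Y"
    by (simp add: convex_INT convex_linear_vimage bounded_linear.linear[OF bounded_linear_vec_nth])
  moreover have "?f (u *\<^sub>R x + v *\<^sub>R y) \<le> u * ?f x + v * ?f y"
    if "x \<in> ?Y" "y \<in> ?Y" "u \<ge> 0" "v \<ge> 0" "u + v = 1" for x y u v
  proof -
    define z where "z = u *\<^sub>R x + v *\<^sub>R y"
    have "z \<in> ?Y" using \<open>convex ?Y\<close> that unfolding z_def convex_def by blast
    define S where "S = \<sigma> + (\<Sum>j\<in>J. a j / z $ j)"
    define slope where "slope w = (\<Sum>j\<in>J. a j * (w $ j - z $ j) / (z $ j)\<^sup>2)" for w
    \<comment> \<open>tangents at the combination \<open>z\<close> itself, whose linear parts cancel\<close>
    have tangent: "?f z - slope w / S \<le> ?f w" if "w \<in> ?Y" for w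
      using ln_add_sum_divide_ge_tangent[of \<sigma> J a "\<lambda>j. w $ j" "\<lambda>j. z $ j"] assms that \<open>z \<in> ?Y\<close>
      unfolding slope_def S_def by simp
    have "u * (x $ j - z $ j) + v * (y $ j - z $ j) = 0" for j
    proof -
      have "u * (x $ j - z $ j) + v * (y $ j - z $ j) = (u * x $ j + v * y $ j) - (u + v) * z $ j"
        by (simp add: algebra_simps)
      then show ?thesis using \<open>u + v = 1\<close> by (simp add: z_def)
    qed
    then have "u * slope x + v * slope y = 0"
      unfolding slope_def sum_distrib_left sum.distrib[symmetric]
      by (simp add: mult.left_commute[of u] mult.left_commute[of v]
          flip: add_divide_distrib distrib_left)
    then have "?f z = u * (?f z - slope x / S) + v * (?f z - slope y / S)"
      using \<open>u + v = 1\<close> by (simp add: algebra_simps add_divide_distrib[symmetric] flip: distrib_right)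
    also have "\<dots> \<le> u * ?f x + v * ?f y"
      using tangent that by (intro add_mono mult_left_mono) auto
    finally show ?thesis unfolding z_def .
  qed
  ultimately show ?thesis unfolding convex_on_def by blast
qed

lemma convex_on_compose_affine:
  assumes "convex_on T f" and "linear h"
  shows "convex_on {x. h x + c \<in> T} (\<lambda>x. f (h x + c))"
proof -
  have affine: "h (u *\<^sub>R x + v *\<^sub>R y) + c = u *\<^sub>R (h x + c) + v *\<^sub>R (h y + c)"
    if "u + v = 1" for u v x y
  proof -
    have "c = u *\<^sub>R c + v *\<^sub>R c" using that by (simp flip: scaleR_add_left)
    then show ?thesis using linear_add[OF \<open>linear h\<close>] linear_scale[OF \<open>linear h\<close>]
      by (simp add: algebra_simps)
  qed
  show ?thesis
    using assms(1) unfolding convex_on_def convex_def by (simp add: affine)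
qed

lemma convex_on_sum_fun:
  assumes "\<And>k. k \<in> K \<Longrightarrow> convex_on S (f k)" and "convex S"
  shows "convex_on S (\<lambda>x. \<Sum>k\<in>K. f k x)"
  using assms
proof (induction K rule: infinite_finite_induct)
  case (insert k K)
  then show ?case by (simp add: convex_on_add)
qed (simp_all add: convex_on_const)

lemma concave_on_sum_fun:
  assumes "\<And>k. k \<in> K \<Longrightarrow> concave_on S (f k)" and "convex S"
  shows "concave_on S (\<lambda>x. \<Sum>k\<in>K. f k x)"
  using convex_on_sum_fun[of K S "\<lambda>k x. - f k x"] assms
  by (simp add: concave_on_def sum_negf)

lemma convex_on_power2_norm:
  "convex_on UNIV (\<lambda>x :: 'a :: real_normed_vector. (norm x)\<^sup>2)"
proof -
  have "(norm (u *\<^sub>R x + v *\<^sub>R y))\<^sup>2 \<le> u * (norm x)\<^sup>2 + v * (norm y)\<^sup>2"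
    if "u \<ge> 0" "v \<ge> 0" "u + v = 1" for u v and x y :: 'a
  proof -
    have "norm (u *\<^sub>R x + v *\<^sub>R y) \<le> u * norm x + v * norm y"
      using norm_triangle_ineq[of "u *\<^sub>R x" "v *\<^sub>R y"] that by simp
    then have "(norm (u *\<^sub>R x + v *\<^sub>R y))\<^sup>2 \<le> (u * norm x + v * norm y)\<^sup>2"
      by (intro power_mono) auto
    also have "\<dots> = u * (norm x)\<^sup>2 + v * (norm y)\<^sup>2 - u * v * (norm x - norm y)\<^sup>2"
    proof -
      have "v = 1 - u" using \<open>u + v = 1\<close> by simp
      then show ?thesis by (simp only:) (simp add: power2_eq_square algebra_simps)
    qed
    also have "\<dots> \<le> u * (norm x)\<^sup>2 + v * (norm y)\<^sup>2" using that by simp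
    finally show ?thesis .
  qed
  then show ?thesis unfolding convex_on_def by simp
qed

lemma convex_hypograph_add:
  fixes F :: "'a::real_vector \<Rightarrow> real" and L :: "'b::real_vector \<Rightarrow> real"
  assumes F: "concave_on Q F" and L: "concave_on B L"
  shows "convex {(q, \<eta>, b). q \<in> Q \<and> b \<in> B \<and> \<eta> \<le> F q + L b}"
proof (rule convexI, clarsimp)
  fix q b q' b' :: _ and \<eta> \<eta>' u v :: real
  assume in_dom: "q \<in> Q" "b \<in> B" "q' \<in> Q" "b' \<in> B"
    and "\<eta> \<le> F q + L b" "\<eta>' \<le> F q' + L b'" and uv: "0 \<le> u" "0 \<le> v" "u + v = 1"
  have "u * \<eta> + v * \<eta>' \<le> u * (F q + L b) + v * (F q' + L b')"
    using \<open>\<eta> \<le> _\<close> \<open>\<eta>' \<le> _\<close> uv by (intro add_mono mult_left_mono) auto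
  also have "\<dots> = (u * F q + v * F q') + (u * L b + v * L b')"
    by (simp add: algebra_simps)
  also have "\<dots> \<le> F (u *\<^sub>R q + v *\<^sub>R q') + L (u *\<^sub>R b + v *\<^sub>R b')"
    using F L in_dom uv unfolding concave_on_iff by (intro add_mono) auto
  finally show "u *\<^sub>R q + v *\<^sub>R q' \<in> Q \<and> u *\<^sub>R b + v *\<^sub>R b' \<in> B
      \<and> u * \<eta> + v * \<eta>' \<le> F (u *\<^sub>R q + v *\<^sub>R q') + L (u *\<^sub>R b + v *\<^sub>R b')"
    using F L in_dom uv unfolding concave_on_iff convex_def by blast
qed

lemma concave_on_linearized_rate:
  fixes c :: "'i \<Rightarrow> 'k::finite \<Rightarrow> real" and p :: "'k \<Rightarrow> real"
  assumes "\<And>j. p j * \<omega> i j \<ge> 0" and "\<And>k. c i k \<ge> 0"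
  shows "concave_on UNIV (\<lambda>q. \<Sum>k\<in>UNIV. c i k * (D_r H \<sigma>2 p \<omega> s qr i
           - (\<Sum>j\<in>UNIV. E_r H \<sigma>2 p \<omega> s qr i j
                * ((norm (q $ j - s i))\<^sup>2 - (norm (qr $ j - s i))\<^sup>2))))"
proof -
  have dist_convex: "convex_on UNIV (\<lambda>q :: (real^2)^'k. (norm (q $ j - s i))\<^sup>2)" for j
    using convex_on_compose_affine[OF convex_on_power2_norm, of "\<lambda>q. q $ j" "- s i"]
    by (simp add: bounded_linear.linear[OF bounded_linear_vec_nth])
  have "E_r H \<sigma>2 p \<omega> s qr i j \<ge> 0" for j
    unfolding E_r_def using assms(1) by simp
  then show ?thesis
    using assms(2) dist_convex
    by (intro concave_on_sum_fun concave_on_cmul concave_on_diff convex_on_sum_fun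
          convex_on_cmul convex_on_diff) (simp_all add: concave_on_const)
qed

lemma convex_slack_domain: "convex {b :: real^'k^'i. \<forall>i' j. - H\<^sup>2 < b $ i' $ j}"
  by (intro convex_box_cart) (simp add: greaterThan_def[symmetric])

lemma concave_on_Lambda_t:
  fixes p :: "'k::finite \<Rightarrow> real" and \<omega> :: "'i::finite \<Rightarrow> 'k \<Rightarrow> real"
  assumes "\<sigma>2 > 0" and "\<And>j. p j * \<omega> i j \<ge> 0"
  shows "concave_on {b. \<forall>i' j. - H\<^sup>2 < b $ i' $ j} (\<lambda>b. Lambda_t H \<sigma>2 p \<omega> b i k)"
proof -
  let ?g = "\<lambda>y :: real^'k. ln (\<sigma>2 + (\<Sum>j\<in>UNIV - {k}. p j * \<omega> i j / y $ j))"
  have "convex_on {b. b $ i + (\<chi> j. H\<^sup>2) \<in> {y. \<forall>j\<in>UNIV - {k}. 0 < y $ j}}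
      (\<lambda>b :: real^'k^'i. ?g (b $ i + (\<chi> j. H\<^sup>2)))"
    using convex_on_ln_add_sum_divide[of \<sigma>2 "UNIV - {k}" "\<lambda>j. p j * \<omega> i j"] assms
    by (intro convex_on_compose_affine bounded_linear.linear[OF bounded_linear_vec_nth]) auto
  then have "convex_on {b. \<forall>j\<in>UNIV - {k}. 0 < H\<^sup>2 + b $ i $ j}
      (\<lambda>b. ln (\<sigma>2 + (\<Sum>j\<in>UNIV - {k}. p j * \<omega> i j / (H\<^sup>2 + b $ i $ j))))"
    by (simp add: add.commute)
  then have "convex_on {b. \<forall>i' j. - H\<^sup>2 < b $ i' $ j}
      (\<lambda>b. ln (\<sigma>2 + (\<Sum>j\<in>UNIV - {k}. p j * \<omega> i j / (H\<^sup>2 + b $ i $ j))))"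
  proof (rule convex_on_subset)
    show "{b. \<forall>i' j. - H\<^sup>2 < b $ i' $ j} \<subseteq> {b. \<forall>j\<in>UNIV - {k}. 0 < H\<^sup>2 + b $ i $ j}"
    proof
      fix b :: "real^'k^'i" assume b: "b \<in> {b. \<forall>i' j. - H\<^sup>2 < b $ i' $ j}"
      have "0 < H\<^sup>2 + b $ i $ j" for j
      proof -
        have "- H\<^sup>2 < b $ i $ j" using b by blast
        then show ?thesis by linarith
      qed
      then show "b \<in> {b. \<forall>j\<in>UNIV - {k}. 0 < H\<^sup>2 + b $ i $ j}" by simp
    qed
  qed (rule convex_slack_domain)
  then show ?thesis
    unfolding concave_on_def Lambda_t_def log_def by (simp add: convex_on_cdiv)
qed

lemma convex_linearized_slack_constraint:
  fixes w t :: "'a::real_inner"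
  shows "convex {(q :: 'a^'k, \<eta> :: real, b :: real^'k^'i).
    b $ i' $ j \<le> - (norm w)\<^sup>2 + 2 * (w \<bullet> (q $ j - t))}"
proof -
  define lhs where "lhs x = snd (snd x) $ i' $ j - 2 * (w \<bullet> fst x $ j)"
    for x :: "('a^'k) \<times> real \<times> (real^'k^'i)"
  have "linear lhs"
    unfolding lhs_def linear_iff by (simp add: inner_add_right algebra_simps)
  moreover have "{(q, \<eta>, b). b $ i' $ j \<le> - (norm w)\<^sup>2 + 2 * (w \<bullet> (q $ j - t))}
      = lhs -` {..- (norm w)\<^sup>2 - 2 * (w \<bullet> t)}"
    unfolding lhs_def by (auto simp: inner_diff_right)
  ultimately show ?thesis by (simp add: convex_linear_vimage)
qed

lemma convex_feas:
  fixes c :: "'i::finite \<Rightarrow> 'k::finite \<Rightarrow> real" and p :: "'k \<Rightarrow> real"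
  assumes "\<sigma>2 > 0" and "\<And>j. p j * \<omega> i j \<ge> 0" and "\<And>k. c i k \<ge> 0"
  shows "convex (feas c H \<sigma>2 p \<omega> s qr i)"
proof -
  have "feas c H \<sigma>2 p \<omega> s qr i =
      {(q, \<eta>, b). q \<in> UNIV \<and> b \<in> {b. \<forall>i' j. - H\<^sup>2 < b $ i' $ j} \<and>
         \<eta> \<le> (\<Sum>k\<in>UNIV. c i k * (D_r H \<sigma>2 p \<omega> s qr i
              - (\<Sum>j\<in>UNIV. E_r H \<sigma>2 p \<omega> s qr i j *
                    ((norm (q $ j - s i))\<^sup>2 - (norm (qr $ j - s i))\<^sup>2))))
          + (\<Sum>k\<in>UNIV. c i k * Lambda_t H \<sigma>2 p \<omega> b i k)}
      \<inter> (\<Inter>i'. \<Inter>j. {(q, \<eta>, b). b $ i' $ j \<le>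
            - (norm (qr $ j - s i'))\<^sup>2 + 2 * ((qr $ j - s i') \<bullet> (q $ j - s i'))})"
    unfolding feas_def by auto
  also have "convex \<dots>"
    using assms
    by (intro convex_Int convex_INT convex_linearized_slack_constraint convex_hypograph_add
          concave_on_linearized_rate concave_on_sum_fun concave_on_cmul concave_on_Lambda_t
          convex_slack_domain)
  finally show ?thesis .
qed

lemma power2_norm_ge_tangent:
  fixes w x :: "'a::real_inner"
  shows "- (norm w)\<^sup>2 + 2 * (w \<bullet> x) \<le> (norm x)\<^sup>2"
proof -
  have "0 \<le> (norm (x - w))\<^sup>2" by simp
  also have "\<dots> = (norm x)\<^sup>2 - 2 * (w \<bullet> x) + (norm w)\<^sup>2"
    by (simp add: power2_norm_eq_inner inner_diff algebra_simps inner_commute)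
  finally show ?thesis by simp
qed

lemma log_received_power_ge_linearization:
  fixes p :: "'k::finite \<Rightarrow> real"
  assumes "H > 0" and "\<sigma>2 > 0" and a: "\<And>j. p j * \<omega> i j \<ge> 0"
  shows "D_r H \<sigma>2 p \<omega> s qr i - (\<Sum>j\<in>UNIV. E_r H \<sigma>2 p \<omega> s qr i j
            * ((norm (q $ j - s i))\<^sup>2 - (norm (qr $ j - s i))\<^sup>2))
      \<le> log 2 (\<sigma>2 + (\<Sum>j\<in>UNIV. p j * chgain \<omega> H s q i j))"
proof -
  define y where "y j = H\<^sup>2 + (norm (q $ j - s i))\<^sup>2" for j
  define z where "z j = d_r H s qr i j" for j
  define S where "S = \<sigma>2 + (\<Sum>j\<in>UNIV. p j * \<omega> i j / z j)"
  have "y j > 0" "z j > 0" for j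
    unfolding y_def z_def d_r_def using \<open>H > 0\<close> by (auto intro: add_pos_nonneg)
  have "S > 0" unfolding S_def
    using \<open>\<sigma>2 > 0\<close> a \<open>\<And>j. z j > 0\<close> by (intro add_pos_nonneg sum_nonneg divide_nonneg_pos) auto
  have D: "D_r H \<sigma>2 p \<omega> s qr i = log 2 S"
    unfolding D_r_def S_def z_def by simp
  define T where "T = (\<Sum>j\<in>UNIV. p j * \<omega> i j * (y j - z j) / (z j)\<^sup>2)"
  have "(\<Sum>j\<in>UNIV. E_r H \<sigma>2 p \<omega> s qr i j
            * ((norm (q $ j - s i))\<^sup>2 - (norm (qr $ j - s i))\<^sup>2)) = T / S / ln 2"
    unfolding E_r_def D T_def sum_divide_distrib using \<open>S > 0\<close>
    by (intro sum.cong) (simp_all add: y_def z_def d_r_def field_simps)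
  then have "D_r H \<sigma>2 p \<omega> s qr i - (\<Sum>j\<in>UNIV. E_r H \<sigma>2 p \<omega> s qr i j
            * ((norm (q $ j - s i))\<^sup>2 - (norm (qr $ j - s i))\<^sup>2)) = (ln S - T / S) / ln 2"
    unfolding D log_def by (simp add: diff_divide_distrib)
  also have "\<dots> \<le> ln (\<sigma>2 + (\<Sum>j\<in>UNIV. p j * \<omega> i j / y j)) / ln 2"
    using ln_add_sum_divide_ge_tangent[of \<sigma>2 UNIV "\<lambda>j. p j * \<omega> i j" y z] assms
      \<open>\<And>j. y j > 0\<close> \<open>\<And>j. z j > 0\<close>
    unfolding S_def T_def by (intro divide_right_mono) auto
  also have "\<dots> = log 2 (\<sigma>2 + (\<Sum>j\<in>UNIV. p j * chgain \<omega> H s q i j))"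
    unfolding log_def y_def chgain_def by simp
  finally show ?thesis .
qed

lemma Lambda_t_le_neg_log_interference:
  fixes p :: "'k::finite \<Rightarrow> real"
  assumes "\<sigma>2 > 0" and a: "\<And>j. p j * \<omega> i j \<ge> 0"
    and b_pos: "\<And>j. - H\<^sup>2 < b $ i $ j" and b_le: "\<And>j. b $ i $ j \<le> (norm (q $ j - s i))\<^sup>2"
  shows "Lambda_t H \<sigma>2 p \<omega> b i k \<le> - log 2 (\<sigma>2 + (\<Sum>j\<in>UNIV - {k}. p j * chgain \<omega> H s q i j))"
proof -
  have "p j * chgain \<omega> H s q i j \<le> p j * \<omega> i j / (H\<^sup>2 + b $ i $ j)" for j
  proof -
    have "0 < H\<^sup>2 + b $ i $ j" using b_pos[of j] by linarith
    then show ?thesis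
      unfolding chgain_def using a[of j] b_le[of j] by (simp add: divide_left_mono)
  qed
  moreover have "0 \<le> p j * chgain \<omega> H s q i j" for j
    unfolding chgain_def using a[of j] by simp
  ultimately show ?thesis
    unfolding Lambda_t_def using \<open>\<sigma>2 > 0\<close>
    by (simp, intro log_mono add_pos_nonneg sum_nonneg add_left_mono sum_mono) auto
qed

lemma log_sinr_ge_linearization:
  fixes p :: "'k::finite \<Rightarrow> real"
  assumes "H > 0" and "\<sigma>2 > 0" and a: "\<And>j. p j * \<omega> i j \<ge> 0"
    and b_pos: "\<And>j. - H\<^sup>2 < b $ i $ j" and b_le: "\<And>j. b $ i $ j \<le> (norm (q $ j - s i))\<^sup>2"
  shows "D_r H \<sigma>2 p \<omega> s qr i - (\<Sum>j\<in>UNIV. E_r H \<sigma>2 p \<omega> s qr i j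
            * ((norm (q $ j - s i))\<^sup>2 - (norm (qr $ j - s i))\<^sup>2)) + Lambda_t H \<sigma>2 p \<omega> b i k
      \<le> log 2 (1 + p k * chgain \<omega> H s q i k
                    / (\<sigma>2 + (\<Sum>j\<in>UNIV - {k}. p j * chgain \<omega> H s q i j)))"
proof -
  define I where "I = \<sigma>2 + (\<Sum>j\<in>UNIV - {k}. p j * chgain \<omega> H s q i j)"
  have nonneg: "0 \<le> p j * chgain \<omega> H s q i j" for j
    unfolding chgain_def using a[of j] by simp
  then have "I > 0" unfolding I_def using \<open>\<sigma>2 > 0\<close> by (intro add_pos_nonneg sum_nonneg) auto
  have "\<sigma>2 + (\<Sum>j\<in>UNIV. p j * chgain \<omega> H s q i j) = I + p k * chgain \<omega> H s q i k"
    unfolding I_def by (simp add: sum.remove[of UNIV k])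
  moreover have "1 + p k * chgain \<omega> H s q i k / I = (I + p k * chgain \<omega> H s q i k) / I"
    using \<open>I > 0\<close> by (simp add: field_simps)
  ultimately have "log 2 (1 + p k * chgain \<omega> H s q i k / I)
      = log 2 (\<sigma>2 + (\<Sum>j\<in>UNIV. p j * chgain \<omega> H s q i j)) - log 2 I"
    using \<open>I > 0\<close> nonneg[of k] by (simp add: log_divide_pos add_pos_nonneg)
  moreover have "D_r H \<sigma>2 p \<omega> s qr i - (\<Sum>j\<in>UNIV. E_r H \<sigma>2 p \<omega> s qr i j
            * ((norm (q $ j - s i))\<^sup>2 - (norm (qr $ j - s i))\<^sup>2))
      \<le> log 2 (\<sigma>2 + (\<Sum>j\<in>UNIV. p j * chgain \<omega> H s q i j))"
    using assms(1,2) a by (rule log_received_power_ge_linearization)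
  moreover have "Lambda_t H \<sigma>2 p \<omega> b i k \<le> - log 2 I"
    unfolding I_def using assms(2) a b_pos b_le by (rule Lambda_t_le_neg_log_interference)
  ultimately show ?thesis unfolding I_def by linarith
qed

lemma rate_ge_of_feas:
  fixes c :: "'i::finite \<Rightarrow> 'k::finite \<Rightarrow> real" and p :: "'k \<Rightarrow> real"
  assumes "H > 0" and "\<sigma>2 > 0" and "\<And>j. p j * \<omega> i j \<ge> 0" and c: "\<And>k. c i k \<ge> 0"
    and "(q, \<eta>, b) \<in> feas c H \<sigma>2 p \<omega> s qr i"
  shows "\<eta> \<le> rate c H \<sigma>2 p \<omega> s q i"
proof -
  let ?lin = "D_r H \<sigma>2 p \<omega> s qr i - (\<Sum>j\<in>UNIV. E_r H \<sigma>2 p \<omega> s qr i j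
            * ((norm (q $ j - s i))\<^sup>2 - (norm (qr $ j - s i))\<^sup>2))"
  have b_pos: "- H\<^sup>2 < b $ i $ j"
    and slack: "b $ i $ j \<le> - (norm (qr $ j - s i))\<^sup>2 + 2 * ((qr $ j - s i) \<bullet> (q $ j - s i))" for j
    using \<open>(q, \<eta>, b) \<in> _\<close> unfolding feas_def by auto
  have b_le: "b $ i $ j \<le> (norm (q $ j - s i))\<^sup>2" for j
    using slack[of j] power2_norm_ge_tangent[of "qr $ j - s i" "q $ j - s i"] by linarith
  have "\<eta> \<le> (\<Sum>k\<in>UNIV. c i k * ?lin) + (\<Sum>k\<in>UNIV. c i k * Lambda_t H \<sigma>2 p \<omega> b i k)"
    using \<open>(q, \<eta>, b) \<in> _\<close> unfolding feas_def by simp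
  also have "\<dots> = (\<Sum>k\<in>UNIV. c i k * (?lin + Lambda_t H \<sigma>2 p \<omega> b i k))"
    by (simp add: distrib_left sum.distrib)
  also have "\<dots> \<le> rate c H \<sigma>2 p \<omega> s q i"
    unfolding rate_def
    by (intro sum_mono mult_left_mono log_sinr_ge_linearization c) (use assms b_pos b_le in auto)
  finally show ?thesis .
qed

theorem proposition2:
  fixes c :: "'i::finite \<Rightarrow> 'k::finite \<Rightarrow> real"
    and H \<sigma>2 :: real and p :: "'k \<Rightarrow> real" and \<omega> :: "'i \<Rightarrow> 'k \<Rightarrow> real"
    and s :: "'i \<Rightarrow> real^2" and qr :: "(real^2)^'k" and i :: 'i
  assumes "H > 0" and "\<sigma>2 > 0"
    and "\<And>i j. \<omega> i j > 0"
    and "\<And>j. p j \<ge> 0"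
    and "\<And>i k. c i k \<in> {0, 1}"
    and "\<And>i. (\<Sum>k\<in>UNIV. c i k) \<le> 1"
  shows "convex (feas c H \<sigma>2 p \<omega> s qr i)
    \<and> (\<forall>(q, \<eta>, b) \<in> feas c H \<sigma>2 p \<omega> s qr i. rate c H \<sigma>2 p \<omega> s q i \<ge> \<eta>)"
proof
  \<comment> \<open>only \<open>c i k \<ge> 0\<close> is used\<close>
  have c: "c i k \<ge> 0" for k
    using assms(5)[of i k] by auto
  have a: "p j * \<omega> i j \<ge> 0" for j
    using assms(3)[of i j] assms(4)[of j] by simp
  show "convex (feas c H \<sigma>2 p \<omega> s qr i)"
    using assms(2) a c by (rule convex_feas)
  show "\<forall>(q, \<eta>, b) \<in> feas c H \<sigma>2 p \<omega> s qr i. rate c H \<sigma>2 p \<omega> s q i \<ge> \<eta>"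
    using assms(1,2) a c by (auto intro: rate_ge_of_feas)
qed

end
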